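(* Let $X$ be a continuous random variable with finite support $[a,b]$, and fix a positive integer $m$. For each $n > m$, let $X_1, \dots, X_n$ be i.i.d. samples from $X$ and let $X_{(1)} \le \dots \le X_{(n)}$ denote their order statistics. Then $E[X_{(k+m)} - X_{(k)}] \to 0$ as $n \to \infty$ uniformly for all $1 \le k \le n-m$; that is, for every $\varepsilon > 0$ there exists $N$ such that for all $n > N$ and all $1 \le k \le n-m$, $E[X_{(k+m)} - X_{(k)}] \le \varepsilon$. *)

theory Defs
  imports "HOL-Probability.Probability"
begin

text \<open>Support of a Borel measure on the reals: the set of points all of whose
  open neighbourhoods have positive measure (the smallest closed set of full measure).\<close>
definition measure_support :: "real measure \<Rightarrow> real set" where
  "measure_support M = {x. \<forall>e>0. emeasure M (ball x e) > 0}"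

text \<open>The k-th order statistic (1-indexed) of the sample x 0, ..., x (n-1).\<close>
definition order_stat :: "nat \<Rightarrow> nat \<Rightarrow> (nat \<Rightarrow> real) \<Rightarrow> real" where
  "order_stat n k x = sort (map x [0..<n]) ! (k - 1)"

end

theory Submission
  imports Defs
begin

text \<open>Cut \<open>[a, b]\<close> into \<open>J\<close> cells of width \<open>\<delta> \<le> \<epsilon>/4\<close>. Since \<open>[a, b]\<close> is the support, every
  cell has probability at least some \<open>p > 0\<close>. Split the sample into \<open>m\<close> blocks of
  \<open>n div m\<close> coordinates: a cell containing fewer than \<open>m\<close> sample points is missed by a
  whole block, so all cells contain at least \<open>m\<close> points except with probability at most
  \<open>J m (1 - p)^(n div m)\<close>. On that event any \<open>m + 1\<close> consecutive order statistics lie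
  within \<open>2\<delta>\<close> of each other, and on its complement their spread is still at most \<open>b - a\<close>.
  Hence the expected gap is at most \<open>2\<delta> + (b - a) J m (1 - p)^(n div m)\<close>, uniformly in \<open>k\<close>.\<close>

lemma sorted_nth_le_iff_less_card:
  fixes ys :: "'a::linorder list"
  assumes "sorted ys" "p < length ys"
  shows "ys ! p \<le> s \<longleftrightarrow> p < card {q. q < length ys \<and> ys ! q \<le> s}"
proof
  assume "ys ! p \<le> s"
  then have "{..p} \<subseteq> {q. q < length ys \<and> ys ! q \<le> s}"
    using assms sorted_nth_mono by fastforce
  from card_mono[OF _ this] show "p < card {q. q < length ys \<and> ys ! q \<le> s}" by simp
next
  assume p: "p < card {q. q < length ys \<and> ys ! q \<le> s}"
  show "ys ! p \<le> s"
  proof (rule ccontr)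
    assume "\<not> ys ! p \<le> s"
    then have "{q. q < length ys \<and> ys ! q \<le> s} \<subseteq> {..<p}"
      using assms sorted_nth_mono by (fastforce simp: not_less[symmetric])
    from card_mono[OF _ this] p show False by simp
  qed
qed

lemma order_stat_le_iff:
  fixes x :: "nat \<Rightarrow> real"
  assumes "1 \<le> k" "k \<le> n"
  shows "order_stat n k x \<le> s \<longleftrightarrow> k \<le> card {i. i < n \<and> x i \<le> s}"
proof -
  let ?ys = "sort (map x [0..<n])"
  have "card {q. q < n \<and> ?ys ! q \<le> s} = length (filter (\<lambda>y. y \<le> s) ?ys)"
    by (simp add: length_filter_conv_card)
  also have "\<dots> = length (filter (\<lambda>y. y \<le> s) (map x [0..<n]))"
    by (metis mset_filter mset_sort size_mset)
  also have "\<dots> = card {i. i < n \<and> x i \<le> s}"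
    by (auto simp: length_filter_conv_card intro!: arg_cong[where f = card])
  finally show ?thesis
    using sorted_nth_le_iff_less_card[of ?ys "k - 1" s] assms
    unfolding order_stat_def by (simp; linarith)
qed

lemma order_stat_in_sample:
  assumes "1 \<le> k" "k \<le> n"
  shows "order_stat n k x \<in> x ` {..<n}"
proof -
  have "order_stat n k x \<in> set (sort (map x [0..<n]))"
    unfolding order_stat_def using assms by (intro nth_mem) simp
  then show ?thesis by auto
qed

lemma order_stat_diff_le_width:
  fixes x :: "nat \<Rightarrow> real"
  assumes "\<forall>i<n. x i \<in> {a..b}" "1 \<le> k" "k \<le> l" "l \<le> n"
  shows "order_stat n l x - order_stat n k x \<le> b - a"
proof -
  have "order_stat n l x \<le> b" "a \<le> order_stat n k x"
    using assms order_stat_in_sample[of l n x] order_stat_in_sample[of k n x] by fastforce+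
  then show ?thesis by simp
qed

lemma grid_cell_above:
  fixes a t \<delta> :: real
  assumes "\<delta> > 0" "a \<le> t" "t + \<delta> < a + real J * \<delta>"
  shows "\<exists>j<J. t < a + real j * \<delta> \<and> a + real (Suc j) * \<delta> \<le> t + 2 * \<delta>"
proof -
  define i where "i = nat \<lfloor>(t - a) / \<delta>\<rfloor>"
  have "0 \<le> (t - a) / \<delta>"
    using assms by simp
  then have "real i \<le> (t - a) / \<delta>" "(t - a) / \<delta> < real i + 1"
    unfolding i_def by linarith+
  then have below: "a + real i * \<delta> \<le> t" and above: "t < a + (real i + 1) * \<delta>"
    using assms(1) by (simp_all add: field_simps)
  have "real i * \<delta> < (real J - 1) * \<delta>"
    using below assms(3) by (simp add: algebra_simps)
  then have "Suc i < J"
    using assms(1) by (simp add: mult_less_cancel_right)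
  moreover have "a + real (Suc (Suc i)) * \<delta> \<le> t + 2 * \<delta>"
    using below by (simp add: algebra_simps)
  ultimately show ?thesis
    using above by (intro exI[of _ "Suc i"]) (simp add: algebra_simps)
qed

lemma order_stat_diff_le_mesh:
  fixes x :: "nat \<Rightarrow> real"
  assumes sample: "\<forall>i<n. x i \<in> {a..b}" and "\<delta> > 0" and b: "b = a + real J * \<delta>"
    and cells: "\<forall>j<J. m \<le> card {i. i < n \<and> x i \<in> {a + real j * \<delta>..a + real (Suc j) * \<delta>}}"
    and k: "1 \<le> k" "k + m \<le> n"
  shows "order_stat n (k + m) x - order_stat n k x \<le> 2 * \<delta>"
proof -
  define t where "t = order_stat n k x"
  define below where "below c = {i. i < n \<and> x i \<le> c}" for c
  have "k \<le> card (below t)"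
    using order_stat_le_iff[of k n x t] k by (simp add: below_def t_def)
  have "k + m \<le> card (below (t + 2 * \<delta>))"
  proof (cases "b \<le> t + \<delta>")
    case True
    then have "below (t + 2 * \<delta>) = {..<n}"
      using sample \<open>\<delta> > 0\<close> by (fastforce simp: below_def)
    then show ?thesis using k by simp
  next
    case False
    have "t \<in> x ` {..<n}"
      unfolding t_def using k by (intro order_stat_in_sample) simp_all
    then have "a \<le> t"
      using sample by auto
    moreover have "t + \<delta> < a + real J * \<delta>"
      using False b by simp
    ultimately obtain j where "j < J"
      and j: "t < a + real j * \<delta>" "a + real (Suc j) * \<delta> \<le> t + 2 * \<delta>"
      using grid_cell_above[OF \<open>\<delta> > 0\<close>] by blast
    define cell where "cell = {i. i < n \<and> x i \<in> {a + real j * \<delta>..a + real (Suc j) * \<delta>}}"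
    have "below t \<inter> cell = {}" "below t \<union> cell \<subseteq> below (t + 2 * \<delta>)"
      unfolding below_def cell_def using j \<open>\<delta> > 0\<close> by auto
    moreover have "finite (below c)" "finite cell" for c
      unfolding below_def cell_def by simp_all
    ultimately have "card (below t) + card cell \<le> card (below (t + 2 * \<delta>))"
      by (metis card_Un_disjoint card_mono)
    moreover have "m \<le> card cell"
      unfolding cell_def using cells \<open>j < J\<close> by blast
    ultimately show ?thesis
      using \<open>k \<le> card (below t)\<close> by linarith
  qed
  then have "order_stat n (k + m) x \<le> t + 2 * \<delta>"
    unfolding below_def using order_stat_le_iff[of "k + m" n x] k by simp
  then show ?thesis
    unfolding t_def by simp
qed

lemma block_subset_lessThan:
  fixes n m r :: nat
  assumes "r < m"
  shows "{r * (n div m)..<Suc r * (n div m)} \<subseteq> {..<n}"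
proof -
  have "Suc r * (n div m) \<le> n"
    using assms by (meson Suc_leI le_trans mult_le_mono1 times_div_less_eq_dividend)
  then show ?thesis by auto
qed

lemma few_hits_imp_block_miss:
  fixes \<omega> :: "nat \<Rightarrow> 'a"
  assumes "card {i. i < n \<and> \<omega> i \<in> A} < m"
  shows "\<exists>r<m. \<forall>i\<in>{r * (n div m)..<Suc r * (n div m)}. \<omega> i \<notin> A"
proof (rule ccontr)
  define L where "L = n div m"
  assume "\<not> ?thesis"
  then obtain hit where hit: "\<And>r. r < m \<Longrightarrow> hit r \<in> {r * L..<Suc r * L} \<and> \<omega> (hit r) \<in> A"
    unfolding L_def by metis
  have "inj_on hit {..<m}"
  proof (rule inj_onI)
    fix r r' assume "r \<in> {..<m}" "r' \<in> {..<m}" "hit r = hit r'"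
    then have "r * L < Suc r' * L" "r' * L < Suc r * L"
      using hit[of r] hit[of r'] by auto
    then show "r = r'"
      by (meson less_SucE mult_less_cancel2 not_less_eq)
  qed
  then have "m = card (hit ` {..<m})"
    by (simp add: card_image)
  also have "\<dots> \<le> card {i. i < n \<and> \<omega> i \<in> A}"
  proof (rule card_mono)
    show "hit ` {..<m} \<subseteq> {i. i < n \<and> \<omega> i \<in> A}"
      using hit block_subset_lessThan unfolding L_def by fastforce
  qed simp
  finally show False
    using assms by simp
qed

lemma AE_in_measure_support:
  fixes \<mu> :: "real measure"
  assumes sets: "sets \<mu> = sets borel"
  shows "AE x in \<mu>. x \<in> measure_support \<mu>"
proof -
  define F where "F = {ball x e | x e. e > 0 \<and> emeasure \<mu> (ball x e) = 0}"
  obtain F' where F': "F' \<subseteq> F" "countable F'" "\<Union>F' = \<Union>F"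
    using Lindelof[of F] unfolding F_def by blast
  have "(\<Union>U\<in>F'. U) \<in> null_sets \<mu>"
    using F' sets by (intro null_sets_UN') (auto simp: F_def null_sets_def)
  moreover have "{x \<in> space \<mu>. x \<notin> measure_support \<mu>} \<subseteq> (\<Union>U\<in>F'. U)"
  proof
    fix x assume "x \<in> {x \<in> space \<mu>. x \<notin> measure_support \<mu>}"
    then obtain e where "e > 0" "emeasure \<mu> (ball x e) = 0"
      unfolding measure_support_def by (auto simp: not_less)
    then have "x \<in> \<Union>F"
      unfolding F_def by force
    then show "x \<in> (\<Union>U\<in>F'. U)"
      using F' by blast
  qed
  ultimately show ?thesis
    by (rule AE_I')
qed

lemma emeasure_atLeastAtMost_pos:
  fixes \<mu> :: "real measure"
  assumes "sets \<mu> = sets borel" "(c + d) / 2 \<in> measure_support \<mu>" "c < d"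
  shows "0 < emeasure \<mu> {c..d}"
proof -
  have "0 < emeasure \<mu> (ball ((c + d) / 2) ((d - c) / 2))"
    using assms(2,3) unfolding measure_support_def by simp
  also have "\<dots> \<le> emeasure \<mu> {c..d}"
    using assms(1) by (intro emeasure_mono) (auto simp: ball_eq_greaterThanLessThan field_simps)
  finally show ?thesis .
qed

lemma grid_cells_measure_lower_bound:
  fixes \<mu> :: "real measure"
  assumes "prob_space \<mu>" "sets \<mu> = sets borel" "measure_support \<mu> = {a..b}"
    and "\<delta> > 0" "b = a + real J * \<delta>"
  shows "\<exists>p. 0 < p \<and> p \<le> 1 \<and> (\<forall>j<J. p \<le> measure \<mu> {a + real j * \<delta>..a + real (Suc j) * \<delta>})"
proof -
  interpret prob_space \<mu> by fact
  define cell where "cell j = measure \<mu> {a + real j * \<delta>..a + real (Suc j) * \<delta>}" for j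
  have "0 < cell j" if "j < J" for j
  proof -
    have "(real j + 1 / 2) * \<delta> \<le> real J * \<delta>"
      using that assms(4) by (intro mult_right_mono) linarith+
    then have "(a + real j * \<delta> + (a + real (Suc j) * \<delta>)) / 2 \<in> measure_support \<mu>"
      using assms(3-5) by (auto simp: algebra_simps)
    then have "0 < emeasure \<mu> {a + real j * \<delta>..a + real (Suc j) * \<delta>}"
      using assms(2,4) by (intro emeasure_atLeastAtMost_pos) simp_all
    then show ?thesis
      unfolding cell_def by (simp add: emeasure_eq_measure)
  qed
  then show ?thesis
    by (intro exI[of _ "Min (insert 1 (cell ` {..<J}))"]) (auto simp: cell_def)
qed

lemma AE_PiM_all_in:
  assumes "prob_space \<mu>" "finite I" "AE x in \<mu>. x \<in> S"
  shows "AE \<omega> in PiM I (\<lambda>_. \<mu>). \<forall>i\<in>I. \<omega> i \<in> S"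
  using assms by (intro AE_finite_allI AE_PiM_component) auto

lemma measure_PiM_misses:
  assumes "prob_space \<mu>" "A \<in> sets \<mu>" "finite I" "B \<subseteq> I"
  shows "measure (PiM I (\<lambda>_. \<mu>)) (PiE I (\<lambda>i. if i \<in> B then space \<mu> - A else space \<mu>))
    = (1 - measure \<mu> A) ^ card B"
proof -
  interpret \<mu>: prob_space \<mu> by fact
  interpret finite_product_prob_space "\<lambda>_. \<mu>" I
    using assms(3) by unfold_locales (auto simp: \<mu>.prob_space_axioms)
  have "measure (PiM I (\<lambda>_. \<mu>)) (PiE I (\<lambda>i. if i \<in> B then space \<mu> - A else space \<mu>))
      = (\<Prod>i\<in>I. if i \<in> B then 1 - measure \<mu> A else 1)"
    using assms(2) by (subst prob_times) (auto intro!: prod.cong simp: \<mu>.prob_compl \<mu>.prob_space)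
  also have "\<dots> = (1 - measure \<mu> A) ^ card B"
    using assms(3,4) by (simp add: prod.If_cases Int_absorb1)
  finally show ?thesis .
qed

lemma measure_PiM_few_hits_le:
  assumes "prob_space \<mu>" "A \<in> sets \<mu>"
  shows "measure (PiM {..<n} (\<lambda>_. \<mu>))
      {\<omega> \<in> space (PiM {..<n} (\<lambda>_. \<mu>)). card {i. i < n \<and> \<omega> i \<in> A} < m}
    \<le> m * (1 - measure \<mu> A) ^ (n div m)"
proof -
  let ?M = "PiM {..<n} (\<lambda>_. \<mu>)"
  define block where "block r = {r * (n div m)..<Suc r * (n div m)}" for r
  define miss where "miss r = PiE {..<n} (\<lambda>i. if i \<in> block r then space \<mu> - A else space \<mu>)" for r
  interpret prob_space ?M
    using assms(1) by (intro prob_space_PiM)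
  have miss_sets: "miss r \<in> sets ?M" for r
    unfolding miss_def using assms(2) by (intro sets_PiM_I_finite) auto
  have "{\<omega> \<in> space ?M. card {i. i < n \<and> \<omega> i \<in> A} < m} \<subseteq> (\<Union>r<m. miss r)"
  proof
    fix \<omega> assume "\<omega> \<in> {\<omega> \<in> space ?M. card {i. i < n \<and> \<omega> i \<in> A} < m}"
    then obtain r where "r < m" "\<forall>i\<in>block r. \<omega> i \<notin> A" "\<omega> \<in> space ?M"
      unfolding block_def using few_hits_imp_block_miss by blast
    then show "\<omega> \<in> (\<Union>r<m. miss r)"
      unfolding miss_def by (auto simp: space_PiM PiE_iff)
  qed
  then have "measure ?M {\<omega> \<in> space ?M. card {i. i < n \<and> \<omega> i \<in> A} < m} \<le> measure ?M (\<Union>r<m. miss r)"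
    using miss_sets by (intro finite_measure_mono) auto
  also have "\<dots> \<le> (\<Sum>r<m. measure ?M (miss r))"
    using miss_sets by (intro measure_UNION_le) auto
  also have "\<dots> = (\<Sum>r<m. (1 - measure \<mu> A) ^ (n div m))"
  proof (rule sum.cong)
    fix r assume "r \<in> {..<m}"
    then have "measure ?M (miss r) = (1 - measure \<mu> A) ^ card (block r)"
      unfolding miss_def block_def using assms
      by (intro measure_PiM_misses block_subset_lessThan) auto
    then show "measure ?M (miss r) = (1 - measure \<mu> A) ^ (n div m)"
      by (simp add: block_def)
  qed simp
  finally show ?thesis by simp
qed

lemma sets_PiM_few_hits:
  fixes n :: nat
  assumes "A \<in> sets \<mu>"
  shows "{\<omega> \<in> space (PiM {..<n} (\<lambda>_. \<mu>)). card {i. i < n \<and> \<omega> i \<in> A} < m}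
    \<in> sets (PiM {..<n} (\<lambda>_. \<mu>))"
proof -
  have count: "card {i. i < n \<and> \<omega> i \<in> A} < m \<longleftrightarrow> (\<Sum>i<n. indicator A (\<omega> i) :: real) < m" for \<omega>
    unfolding indicator_def by (simp add: Int_def lessThan_def)
  have "{\<omega> \<in> space (PiM {..<n} (\<lambda>_. \<mu>)). (\<Sum>i<n. indicator A (\<omega> i) :: real) < m}
      \<in> sets (PiM {..<n} (\<lambda>_. \<mu>))"
    using assms by measurable
  then show ?thesis
    by (simp only: count)
qed

text \<open>No measurability of \<open>g\<close> is required: a non-integrable \<open>g\<close> has integral \<open>0\<close>.\<close>

lemma integral_le_of_AE_le_indicator:
  assumes "prob_space M" "B \<in> sets M" "0 \<le> c" "0 \<le> d"
    and bound: "AE \<omega> in M. g \<omega> \<le> c + d * indicator B \<omega>"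
  shows "(\<integral>\<omega>. g \<omega> \<partial>M) \<le> c + d * measure M B"
proof (cases "integrable M g")
  case True
  interpret prob_space M by fact
  have "integrable M (\<lambda>\<omega>. c + d * indicator B \<omega>)"
    using assms(2) by (auto simp: less_top[symmetric])
  then have "(\<integral>\<omega>. g \<omega> \<partial>M) \<le> (\<integral>\<omega>. c + d * indicator B \<omega> \<partial>M)"
    using True bound by (intro integral_mono_AE)
  also have "\<dots> = c + d * measure M B"
    using assms(2) by (subst Bochner_Integration.integral_add) (auto simp: less_top[symmetric] prob_space)
  finally show ?thesis .
next
  case False
  then show ?thesis
    using assms(3,4) by (simp add: not_integrable_integral_eq)
qed

lemma order_stat_gap_expectation_le:
  fixes \<mu> :: "real measure"
  assumes \<mu>: "prob_space \<mu>" "sets \<mu> = sets borel" and sample: "AE x in \<mu>. x \<in> {a..b}"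
    and "\<delta> > 0" and b: "b = a + real J * \<delta>"
    and p: "\<forall>j<J. p \<le> measure \<mu> {a + real j * \<delta>..a + real (Suc j) * \<delta>}"
    and k: "1 \<le> k" "k + m \<le> n"
  shows "(\<integral>\<omega>. (order_stat n (k + m) \<omega> - order_stat n k \<omega>) \<partial>PiM {..<n} (\<lambda>_. \<mu>))
    \<le> 2 * \<delta> + (b - a) * (real J * real m * (1 - p) ^ (n div m))"
proof -
  let ?M = "PiM {..<n} (\<lambda>_. \<mu>)"
  interpret \<mu>: prob_space \<mu> by fact
  interpret prob_space ?M
    using \<mu>(1) by (intro prob_space_PiM)
  define cell where "cell j = {a + real j * \<delta>..a + real (Suc j) * \<delta>}" for j
  define few where "few j = {\<omega> \<in> space ?M. card {i. i < n \<and> \<omega> i \<in> cell j} < m}" for j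
  define bad where "bad = (\<Union>j<J. few j)"
  have cell_sets: "cell j \<in> sets \<mu>" for j
    unfolding cell_def using \<mu>(2) by simp
  have few_sets: "few j \<in> sets ?M" for j
    unfolding few_def using cell_sets by (rule sets_PiM_few_hits)
  have "measure ?M bad \<le> (\<Sum>j<J. measure ?M (few j))"
    unfolding bad_def using few_sets by (intro measure_UNION_le) auto
  also have "\<dots> \<le> (\<Sum>j<J. m * (1 - p) ^ (n div m))"
  proof (rule sum_mono)
    fix j assume "j \<in> {..<J}"
    have "measure ?M (few j) \<le> m * (1 - measure \<mu> (cell j)) ^ (n div m)"
      unfolding few_def by (rule measure_PiM_few_hits_le[OF \<mu>(1) cell_sets])
    also have "\<dots> \<le> m * (1 - p) ^ (n div m)"
      using p \<open>j \<in> {..<J}\<close>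
      by (intro mult_left_mono power_mono) (auto simp: cell_def \<mu>.prob_le_1)
    finally show "measure ?M (few j) \<le> m * (1 - p) ^ (n div m)" .
  qed
  finally have bad_le: "measure ?M bad \<le> real J * real m * (1 - p) ^ (n div m)"
    by simp
  have "AE \<omega> in ?M. \<forall>i\<in>{..<n}. \<omega> i \<in> {a..b}"
    using \<mu>(1) sample by (intro AE_PiM_all_in) simp_all
  then have "AE \<omega> in ?M. order_stat n (k + m) \<omega> - order_stat n k \<omega> \<le> 2 * \<delta> + (b - a) * indicator bad \<omega>"
    using AE_space
  proof eventually_elim
    case (elim \<omega>)
    show ?case
    proof (cases "\<omega> \<in> bad")
      case True
      then show ?thesis
        using order_stat_diff_le_width[of n \<omega> a b k "k + m"] elim k \<open>\<delta> > 0\<close> by simp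
    next
      case False
      then have "\<forall>j<J. m \<le> card {i. i < n \<and> \<omega> i \<in> cell j}"
        using elim unfolding bad_def few_def by (auto simp: not_less)
      then show ?thesis
        using order_stat_diff_le_mesh[of n \<omega> a b \<delta> J m k] elim False k \<open>\<delta> > 0\<close> b
        by (simp add: cell_def)
    qed
  qed
  then have "(\<integral>\<omega>. (order_stat n (k + m) \<omega> - order_stat n k \<omega>) \<partial>?M) \<le> 2 * \<delta> + (b - a) * measure ?M bad"
    using few_sets b \<open>\<delta> > 0\<close> by (intro integral_le_of_AE_le_indicator prob_space_axioms) (auto simp: bad_def)
  also have "\<dots> \<le> 2 * \<delta> + (b - a) * (real J * real m * (1 - p) ^ (n div m))"
    using bad_le b \<open>\<delta> > 0\<close> by (intro add_left_mono mult_left_mono) auto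
  finally show ?thesis .
qed

lemma order_stat_gap_expectation_uniformly_small:
  fixes \<mu> :: "real measure" and m :: nat
  assumes \<mu>: "prob_space \<mu>" "sets \<mu> = sets borel" and support: "measure_support \<mu> = {a..b}"
    and "m > 0" "\<epsilon> > 0"
  shows "\<exists>N. \<forall>n>N. \<forall>k. 1 \<le> k \<and> k + m \<le> n \<longrightarrow>
    (\<integral>\<omega>. (order_stat n (k + m) \<omega> - order_stat n k \<omega>) \<partial>PiM {..<n} (\<lambda>_. \<mu>)) \<le> \<epsilon>"
proof -
  interpret \<mu>: prob_space \<mu> by fact
  have sample: "AE x in \<mu>. x \<in> {a..b}"
    using AE_in_measure_support[OF \<mu>(2)] support by simp
  have "a \<le> b"
  proof (rule ccontr)
    assume "\<not> a \<le> b"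
    then have "AE x in \<mu>. False"
      using sample by simp
    then show False by simp
  qed
  then consider "a = b" | "a < b" by linarith
  then show ?thesis
  proof cases
    case 1
    have "b = a + real 0 * (\<epsilon> / 2)"
      using 1 by simp
    from order_stat_gap_expectation_le[OF \<mu> sample _ this, of 1]
    show ?thesis
      using \<open>\<epsilon> > 0\<close> by auto
  next
    case 2
    define J where "J = nat \<lceil>4 * (b - a) / \<epsilon>\<rceil>"
    define \<delta> where "\<delta> = (b - a) / J"
    have "4 * (b - a) / \<epsilon> \<le> J" "0 < 4 * (b - a) / \<epsilon>"
      unfolding J_def using 2 \<open>\<epsilon> > 0\<close> by (linarith, simp)
    then have "0 < J" "4 * (b - a) \<le> J * \<epsilon>"
      using \<open>\<epsilon> > 0\<close> by (linarith, simp add: field_simps)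
    then have "\<delta> > 0" "\<delta> \<le> \<epsilon> / 4" and b: "b = a + real J * \<delta>"
      unfolding \<delta>_def using 2 by (simp_all add: field_simps)
    obtain p where p: "0 < p" "p \<le> 1" "\<forall>j<J. p \<le> measure \<mu> {a + real j * \<delta>..a + real (Suc j) * \<delta>}"
      using grid_cells_measure_lower_bound[OF \<mu> support \<open>\<delta> > 0\<close> b] by blast
    have "(\<lambda>L. (b - a) * (real J * real m * (1 - p) ^ L)) \<longlonglongrightarrow> 0"
      using p by (intro tendsto_mult_right_zero LIMSEQ_power_zero) simp
    from order_tendstoD(2)[OF this, of "\<epsilon> / 2"]
    have "\<forall>\<^sub>F L in sequentially. (b - a) * (real J * real m * (1 - p) ^ L) < \<epsilon> / 2"
      using \<open>\<epsilon> > 0\<close> by simp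
    then obtain L0 where L0: "\<And>L. L \<ge> L0 \<Longrightarrow> (b - a) * (real J * real m * (1 - p) ^ L) < \<epsilon> / 2"
      unfolding eventually_sequentially by blast
    have "(\<integral>\<omega>. (order_stat n (k + m) \<omega> - order_stat n k \<omega>) \<partial>PiM {..<n} (\<lambda>_. \<mu>)) \<le> \<epsilon>"
      if "n > m * L0" "1 \<le> k" "k + m \<le> n" for n k
    proof -
      have "L0 \<le> n div m"
        using that(1) \<open>m > 0\<close> by (simp add: less_eq_div_iff_mult_less_eq mult.commute)
      then show ?thesis
        using order_stat_gap_expectation_le[OF \<mu> sample \<open>\<delta> > 0\<close> b p(3) that(2,3)] L0 \<open>\<delta> \<le> \<epsilon> / 4\<close>
        by fastforce
    qed
    then show ?thesis by blast
  qed
qed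

theorem corollary1:
  fixes P :: "'a measure" and X :: "'a \<Rightarrow> real" and f :: "real \<Rightarrow> ennreal"
    and a b :: real and m :: nat
  assumes "prob_space P"
    and "distributed P lborel X f"
    and "measure_support (distr P borel X) = {a..b}"
    and "m > 0"
  shows "\<forall>\<epsilon>>0. \<exists>N. \<forall>n>N. \<forall>k. 1 \<le> k \<and> k \<le> n - m \<longrightarrow>
           (\<integral>\<omega>. (order_stat n (k + m) \<omega> - order_stat n k \<omega>)
              \<partial>(PiM {..<n} (\<lambda>_. distr P borel X))) \<le> \<epsilon>"
proof -
  have "X \<in> measurable P borel"
    using distributed_measurable[OF assms(2)] measurable_cong_sets[OF refl sets_lborel] by blast
  then have "prob_space (distr P borel X)"
    by (rule prob_space.prob_space_distr[OF assms(1)])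
  from order_stat_gap_expectation_uniformly_small[OF this _ assms(3,4)]
  have "\<forall>\<epsilon>>0. \<exists>N. \<forall>n>N. \<forall>k. 1 \<le> k \<and> k + m \<le> n \<longrightarrow>
      (\<integral>\<omega>. (order_stat n (k + m) \<omega> - order_stat n k \<omega>) \<partial>(PiM {..<n} (\<lambda>_. distr P borel X))) \<le> \<epsilon>"
    by simp
  moreover have "1 \<le> k \<and> k \<le> n - m \<longleftrightarrow> 1 \<le> k \<and> k + m \<le> n" for k n :: nat
    by linarith
  ultimately show ?thesis
    by simp
qed

end
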